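(* Blocker has a strategy ensuring $g_{\mathrm{ECB}}(n,K_3)\le (1+o(1))\frac{2n}{3}$ as $n\to\infty$.
   Context: Embedded Constructor-Blocker game: the vertices of $K_n$ are placed at the $n$-th roots of unity in the complex plane, and each edge is drawn as the straight chord inside the unit disk between its endpoints. Constructor and Blocker alternately claim previously unclaimed edges, Constructor moving first. Constructor may only claim an edge whose chord does not cross (in an interior point) any chord she has already claimed; Blocker may claim any unclaimed edge. The game ends when Constructor cannot claim any more edges or all edges are claimed. The score is the number of triangles in Constructor's graph at the end; Constructor maximizes it, Blocker minimizes it. $g_{\mathrm{ECB}}(n,K_3)$ denotes the score under optimal play. *)

theory Defs
  imports "HOL-Analysis.Analysis"
begin

text \<open>Vertex i of K_n (i < n) sits at the n-th root of unity exp(2 pi i k/n).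
  An edge is an ordered pair (i,j) with i < j < n, standing for the chord
  between root i and root j.\<close>

definition vpos :: "nat \<Rightarrow> nat \<Rightarrow> complex" where
  "vpos n i = cis (2 * pi * real i / real n)"

definition ecb_edges :: "nat \<Rightarrow> (nat \<times> nat) set" where
  "ecb_edges n = {(i, j). i < j \<and> j < n}"

definition chords_cross :: "nat \<Rightarrow> nat \<times> nat \<Rightarrow> nat \<times> nat \<Rightarrow> bool" where
  "chords_cross n e f \<longleftrightarrow>
     open_segment (vpos n (fst e)) (vpos n (snd e)) \<inter>
     open_segment (vpos n (fst f)) (vpos n (snd f)) \<noteq> {}"

definition constr_moves :: "nat \<Rightarrow> (nat \<times> nat) set \<Rightarrow> (nat \<times> nat) set \<Rightarrow> (nat \<times> nat) set" where
  "constr_moves n C B = {e \<in> ecb_edges n. e \<notin> C \<and> e \<notin> B \<and> (\<forall>f\<in>C. \<not> chords_cross n e f)}"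

definition blocker_moves :: "nat \<Rightarrow> (nat \<times> nat) set \<Rightarrow> (nat \<times> nat) set \<Rightarrow> (nat \<times> nat) set" where
  "blocker_moves n C B = {e \<in> ecb_edges n. e \<notin> C \<and> e \<notin> B}"

definition num_triangles :: "nat \<Rightarrow> (nat \<times> nat) set \<Rightarrow> nat" where
  "num_triangles n C = card {(a, b, c). a < b \<and> b < c \<and> c < n \<and>
       (a, b) \<in> C \<and> (b, c) \<in> C \<and> (a, c) \<in> C}"

text \<open>Minimax value of the game with remaining fuel k (an upper bound on the number
  of remaining moves), with Constructor to move iff the flag is True.\<close>
primrec ecb_val :: "nat \<Rightarrow> nat \<Rightarrow> bool \<Rightarrow> (nat \<times> nat) set \<Rightarrow> (nat \<times> nat) set \<Rightarrow> nat" where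
  "ecb_val n 0 t C B = num_triangles n C"
| "ecb_val n (Suc k) t C B =
     (if t then
        (if constr_moves n C B = {} then num_triangles n C
         else Max ((\<lambda>e. ecb_val n k False (insert e C) B) ` constr_moves n C B))
      else
        (if blocker_moves n C B = {} then num_triangles n C
         else Min ((\<lambda>e. ecb_val n k True C (insert e B)) ` blocker_moves n C B)))"

text \<open>g_ECB(n, K_3): value under optimal play from the empty board, Constructor first.
  The fuel card (ecb_edges n) suffices since every move claims a new edge.\<close>
definition g_ECB_K3 :: "nat \<Rightarrow> nat" where
  "g_ECB_K3 n = ecb_val n (card (ecb_edges n)) True {} {}"

end

theory Submission
  imports Defs
begin

(* Blocker pairs the boundary edges {3k, 3k+1} and {3k+1, 3k+2}: whenever Constructor claims
   one edge of a pair, Blocker claims the other, so Constructor never owns both.  Her graph is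
   non-crossing, and for vertices in convex position two chords a c and b d with a < b < c < d
   always cross.  Hence a triangle a < b < c is determined by its middle vertex b, and if two
   consecutive vertices i, i+1 are both middle vertices then the boundary edge {i, i+1} is
   present.  So no block {3k, 3k+1, 3k+2} consists of middle vertices only, and there are at
   most n - n div 3 <= (2n + 2)/3 triangles. *)

definition orient :: "complex \<Rightarrow> complex \<Rightarrow> complex \<Rightarrow> real" where
  "orient X Y Z = Im (cnj (Y - X) * (Z - X))"

lemma open_segment_diagonals_intersect:
  assumes ABC: "orient A B C > 0" and ACD: "orient A C D > 0"
    and ABD: "orient A B D > 0" and BCD: "orient B C D > 0"
  shows "open_segment A C \<inter> open_segment B D \<noteq> {}"
proof -
  define d where "d = orient A B C + orient A C D"
  have d_alt: "d = orient A B D + orient B C D"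
    by (simp add: d_def orient_def algebra_simps)
  have "d > 0" using ABC ACD by (simp add: d_def)
  \<comment> \<open>the diagonals divide each other in the ratios of the areas of the four triangles\<close>
  define s where "s = orient A B D / d"
  define t where "t = orient A B C / d"
  have "1 - s = orient B C D / d" using \<open>d > 0\<close> by (simp add: s_def field_simps d_alt)
  have "1 - t = orient A C D / d" using \<open>d > 0\<close> by (simp add: t_def field_simps d_def)
  have "(1 - s) *\<^sub>R A + s *\<^sub>R C = (1 / d) *\<^sub>R (orient B C D *\<^sub>R A + orient A B D *\<^sub>R C)"
    unfolding \<open>1 - s = _\<close> unfolding s_def by (simp add: scaleR_add_right)
  also have "orient B C D *\<^sub>R A + orient A B D *\<^sub>R C = orient A C D *\<^sub>R B + orient A B C *\<^sub>R D"
    by (simp add: orient_def complex_eq_iff algebra_simps)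
  also have "(1 / d) *\<^sub>R \<dots> = (1 - t) *\<^sub>R B + t *\<^sub>R D"
    unfolding \<open>1 - t = _\<close> unfolding t_def by (simp add: scaleR_add_right)
  finally have "(1 - s) *\<^sub>R A + s *\<^sub>R C = (1 - t) *\<^sub>R B + t *\<^sub>R D" .
  moreover have "A \<noteq> C" "B \<noteq> D" using ABC BCD by (auto simp: orient_def)
  moreover have "0 < s" "0 < t" using ABC ABD \<open>d > 0\<close> by (simp_all add: s_def t_def)
  moreover have "s < 1" "t < 1"
    using divide_pos_pos[OF BCD \<open>d > 0\<close>] divide_pos_pos[OF ACD \<open>d > 0\<close>]
      \<open>1 - s = _\<close> \<open>1 - t = _\<close>
    by linarith+
  ultimately have "(1 - s) *\<^sub>R A + s *\<^sub>R C \<in> open_segment A C \<inter> open_segment B D"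
    unfolding Int_iff in_segment by blast
  then show ?thesis by blast
qed

lemma sin_add_lt_sin_plus_sin:
  fixes u v :: real
  assumes "0 < u" "0 < v" "u + v < 2 * pi"
  shows "sin (u + v) < sin u + sin v"
proof -
  define p q where "p = u / 2" and "q = v / 2"
  have "sin p > 0" "sin q > 0" "sin (p + q) > 0"
    using assms by (auto simp: p_def q_def intro!: sin_gt_zero)
  moreover have "sin u + sin v - sin (u + v) = 4 * sin p * sin q * sin (p + q)"
  proof -
    have "u = 2 * p" "v = 2 * q" "u + v = 2 * (p + q)" by (simp_all add: p_def q_def)
    then have "sin u + sin v - sin (u + v)
        = 2 * sin p * cos p + 2 * sin q * cos q - 2 * sin (p + q) * cos (p + q)"
      by (simp only: sin_double)
    also have "\<dots> = 4 * sin p * sin q * sin (p + q)"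
      using sin_cos_squared_add[of p] sin_cos_squared_add[of q]
      unfolding sin_add cos_add by algebra
    finally show ?thesis .
  qed
  ultimately show ?thesis by (metis diff_gt_0_iff_gt mult_pos_pos zero_less_numeral)
qed

lemma orient_cis: "orient (cis x) (cis y) (cis z) = sin (y - x) + sin (z - y) - sin (z - x)"
  by (simp add: orient_def sin_diff algebra_simps)

lemma orient_cis_pos:
  assumes "x < y" "y < z" "z < x + 2 * pi"
  shows "orient (cis x) (cis y) (cis z) > 0"
  using sin_add_lt_sin_plus_sin[of "y - x" "z - y"] assms by (simp add: orient_cis)

lemma chords_cross_interleaved:
  assumes "a < b" "b < c" "c < d" "d < n"
  shows "chords_cross n (a, c) (b, d)"
proof -
  define \<theta> where "\<theta> k = 2 * pi * real k / real n" for k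
  have strict_mono: "\<theta> i < \<theta> j" if "i < j" for i j
    using that assms by (simp add: \<theta>_def divide_strict_right_mono)
  have mono: "\<theta> i \<le> \<theta> j" if "i \<le> j" for i j
    using that by (simp add: \<theta>_def divide_right_mono)
  have "0 \<le> \<theta> a" "\<theta> d < 2 * pi"
    using assms by (simp_all add: \<theta>_def field_simps)
  then have "orient (cis (\<theta> i)) (cis (\<theta> j)) (cis (\<theta> k)) > 0"
    if "i < j" "j < k" "a \<le> i" "k \<le> d" for i j k
    using that strict_mono mono[of a i] mono[of k d] by (intro orient_cis_pos) force+
  then have "open_segment (cis (\<theta> a)) (cis (\<theta> c)) \<inter> open_segment (cis (\<theta> b)) (cis (\<theta> d))
      \<noteq> {}"
    using assms by (intro open_segment_diagonals_intersect) auto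
  then show ?thesis by (simp add: chords_cross_def vpos_def \<theta>_def)
qed

definition noncrossing_graph :: "nat \<Rightarrow> (nat \<times> nat) set \<Rightarrow> bool" where
  "noncrossing_graph n C \<longleftrightarrow> C \<subseteq> ecb_edges n \<and> pairwise (\<lambda>e f. \<not> chords_cross n e f) C"

lemma noncrossing_graph_not_interleaved:
  assumes "noncrossing_graph n C" "(a, c) \<in> C" "(b, d) \<in> C" "a < b" "b < c" "c < d"
  shows False
proof -
  have "d < n" using assms(1,3) by (auto simp: noncrossing_graph_def ecb_edges_def)
  then have "chords_cross n (a, c) (b, d)"
    by (rule chords_cross_interleaved[OF assms(4-6)])
  then show False using assms(1-4) by (auto simp: noncrossing_graph_def pairwise_def)
qed

definition triangles :: "nat \<Rightarrow> (nat \<times> nat) set \<Rightarrow> (nat \<times> nat \<times> nat) set" where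
  "triangles n C = {(a, b, c). a < b \<and> b < c \<and> c < n \<and> (a, b) \<in> C \<and> (b, c) \<in> C \<and> (a, c) \<in> C}"

lemma inj_on_middle_vertex:
  assumes "noncrossing_graph n C"
  shows "inj_on (\<lambda>(a, b, c). b) (triangles n C)"
proof (rule inj_onI, clarsimp simp: triangles_def)
  fix a b c a' c'
  assume "a < b" "b < c" "(a, b) \<in> C" "(b, c) \<in> C" "(a, c) \<in> C"
    and "a' < b" "b < c'" "(a', b) \<in> C" "(b, c') \<in> C" "(a', c') \<in> C"
  moreover note noncrossing_graph_not_interleaved[OF assms]
  ultimately show "a = a' \<and> c = c'"
    by (metis linorder_neqE_nat)
qed

lemma triangle_middles_adjacent:
  assumes "noncrossing_graph n C" "(a, i, c) \<in> triangles n C" "(a', Suc i, c') \<in> triangles n C"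
  shows "(i, Suc i) \<in> C"
proof (rule ccontr)
  assume "(i, Suc i) \<notin> C"
  moreover have "a' < Suc i" "i < c" "(a', Suc i) \<in> C" "(i, c) \<in> C"
    using assms(2,3) by (auto simp: triangles_def)
  ultimately have "a' < i" "Suc i < c" "(a', Suc i) \<in> C" "(i, c) \<in> C"
    by (metis Suc_lessI less_SucE)+
  then show False using noncrossing_graph_not_interleaved[OF assms(1)] by blast
qed

lemma card_le_if_no_block_contained:
  fixes M :: "nat set"
  assumes "M \<subseteq> {..<n}" and "\<And>k. m * k + m \<le> n \<Longrightarrow> \<not> {m * k..<m * k + m} \<subseteq> M"
  shows "card M \<le> n - n div m"
proof -
  have block_le: "m * k + m \<le> n" if "k < n div m" for k
  proof -
    have "m * k + m = m * Suc k" by simp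
    also have "\<dots> \<le> m * (n div m)" using that by (intro mult_le_mono2) simp
    also have "\<dots> \<le> n" by (rule times_div_less_eq_dividend)
    finally show ?thesis .
  qed
  then have "\<exists>i. i \<in> {m * k..<m * k + m} - M" if "k < n div m" for k
    using assms(2) that by blast
  then obtain f where f: "\<And>k. k < n div m \<Longrightarrow> f k \<in> {m * k..<m * k + m} - M" by metis
  have "inj_on f {..<n div m}"
    by (rule inj_on_inverseI[where g = "\<lambda>i. i div m"]) (use f in \<open>fastforce intro!: div_nat_eqI\<close>)
  moreover have "f ` {..<n div m} \<subseteq> {..<n} - M"
    using f block_le by fastforce
  ultimately have "card M + n div m = card (M \<union> f ` {..<n div m})"
    by (subst card_Un_disjoint) (auto simp: card_image finite_subset[OF assms(1)])
  also have "\<dots> \<le> card {..<n}"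
    using assms(1) \<open>f ` _ \<subseteq> _\<close> by (intro card_mono) auto
  finally have "card M + n div m \<le> n" by simp
  then show ?thesis by simp
qed

lemma num_triangles_le_if_no_block_path:
  assumes "noncrossing_graph n C"
    and "\<And>k. 3 * k + 2 < n \<Longrightarrow> (3 * k, 3 * k + 1) \<notin> C \<or> (3 * k + 1, 3 * k + 2) \<notin> C"
  shows "num_triangles n C \<le> n - n div 3"
proof -
  let ?M = "{b. \<exists>a c. (a, b, c) \<in> triangles n C}"
  have "?M = (\<lambda>(a, b, c). b) ` triangles n C" by force
  then have "num_triangles n C = card ?M"
    using inj_on_middle_vertex[OF assms(1)] by (simp add: card_image num_triangles_def triangles_def)
  also have "card ?M \<le> n - n div 3"
  proof (rule card_le_if_no_block_contained)
    show "?M \<subseteq> {..<n}" by (auto simp: triangles_def)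
    fix k assume "3 * k + 3 \<le> n"
    show "\<not> {3 * k..<3 * k + 3} \<subseteq> ?M"
    proof
      assume "{3 * k..<3 * k + 3} \<subseteq> ?M"
      then have "i \<in> ?M" if "3 * k \<le> i" "i < 3 * k + 3" for i
        using that by auto
      from this[of "3 * k"] this[of "Suc (3 * k)"] this[of "Suc (Suc (3 * k))"]
      obtain a0 c0 a1 c1 a2 c2 where
        "(a0, 3 * k, c0) \<in> triangles n C" "(a1, Suc (3 * k), c1) \<in> triangles n C"
        "(a2, Suc (Suc (3 * k)), c2) \<in> triangles n C"
        by auto
      then have "(3 * k, Suc (3 * k)) \<in> C" "(Suc (3 * k), Suc (Suc (3 * k))) \<in> C"
        using triangle_middles_adjacent[OF assms(1)] by blast+
      then show False using assms(2)[of k] \<open>3 * k + 3 \<le> n\<close> by simp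
    qed
  qed
  finally show ?thesis .
qed

lemma finite_ecb_edges: "finite (ecb_edges n)"
  by (rule finite_subset[of _ "{..<n} \<times> {..<n}"]) (auto simp: ecb_edges_def)

locale edge_pairing =
  fixes n :: nat and partner :: "nat \<times> nat \<Rightarrow> nat \<times> nat \<Rightarrow> bool"
  assumes partner_sym: "partner e f \<Longrightarrow> partner f e"
    and partner_unique: "partner e f \<Longrightarrow> partner e g \<Longrightarrow> f = g"
    and partner_irrefl: "\<not> partner e e"
    and partner_edge: "partner e f \<Longrightarrow> f \<in> ecb_edges n"
begin

(* With Constructor to move (t = True) Blocker owns the partner of each of Constructor's edges;
   with Blocker to move this may fail for the edge e\<^sub>0 Constructor has just claimed. *)
definition pairing_inv :: "bool \<Rightarrow> (nat \<times> nat) set \<Rightarrow> (nat \<times> nat) set \<Rightarrow> bool" where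
  "pairing_inv t C B \<longleftrightarrow>
     noncrossing_graph n C \<and> C \<inter> B = {} \<and> (\<forall>e\<in>C. \<forall>f\<in>C. \<not> partner e f) \<and>
     (\<exists>e\<^sub>0. \<forall>e\<in>C. (t \<or> e \<noteq> e\<^sub>0) \<longrightarrow> (\<forall>f. partner e f \<longrightarrow> f \<in> B))"

lemma pairing_inv_constructor_move:
  assumes "pairing_inv True C B" "e \<in> constr_moves n C B"
  shows "pairing_inv False (insert e C) B"
proof -
  have inv: "noncrossing_graph n C" "C \<inter> B = {}" "\<forall>x\<in>C. \<forall>y\<in>C. \<not> partner x y"
    "\<forall>x\<in>C. \<forall>f. partner x f \<longrightarrow> f \<in> B"
    using assms(1) by (auto simp: pairing_inv_def)
  have e: "e \<in> ecb_edges n" "e \<notin> C" "e \<notin> B" "\<forall>f\<in>C. \<not> chords_cross n e f"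
    using assms(2) by (auto simp: constr_moves_def)
  have "\<forall>f\<in>C. \<not> chords_cross n f e"
    using e(4) by (auto simp: chords_cross_def)
  then have "noncrossing_graph n (insert e C)"
    using inv(1) e by (auto simp: noncrossing_graph_def pairwise_insert)
  moreover have "\<not> partner x y" if "x \<in> insert e C" "y \<in> insert e C" for x y
    using that inv(2-4) e(3) partner_irrefl partner_sym by blast
  ultimately show ?thesis
    using inv e unfolding pairing_inv_def by blast
qed

lemma pairing_inv_blocker_reply:
  assumes "pairing_inv False C B" "blocker_moves n C B \<noteq> {}"
  shows "\<exists>f\<in>blocker_moves n C B. pairing_inv True C (insert f B)"
proof -
  obtain e\<^sub>0 where answered: "\<forall>e\<in>C. e \<noteq> e\<^sub>0 \<longrightarrow> (\<forall>f. partner e f \<longrightarrow> f \<in> B)"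
    using assms(1) by (auto simp: pairing_inv_def)
  have "\<exists>f\<in>blocker_moves n C B. \<forall>g. e\<^sub>0 \<in> C \<longrightarrow> partner e\<^sub>0 g \<longrightarrow> g \<in> insert f B"
  proof (cases "\<exists>f. e\<^sub>0 \<in> C \<and> partner e\<^sub>0 f \<and> f \<notin> B")
    case True
    then obtain f where f: "e\<^sub>0 \<in> C" "partner e\<^sub>0 f" "f \<notin> B" by blast
    then have "f \<notin> C" using assms(1) by (auto simp: pairing_inv_def)
    with f partner_edge have "f \<in> blocker_moves n C B" by (auto simp: blocker_moves_def)
    moreover have "\<forall>g. e\<^sub>0 \<in> C \<longrightarrow> partner e\<^sub>0 g \<longrightarrow> g \<in> insert f B"
      using f partner_unique by blast
    ultimately show ?thesis by blast
  next
    case False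
    then show ?thesis using assms(2) by blast
  qed
  then obtain f where
    f: "f \<in> blocker_moves n C B" "\<forall>g. e\<^sub>0 \<in> C \<longrightarrow> partner e\<^sub>0 g \<longrightarrow> g \<in> insert f B"
    by blast
  have "\<forall>e\<in>C. \<forall>g. partner e g \<longrightarrow> g \<in> insert f B" using f(2) answered by (metis insertCI)
  moreover have "C \<inter> insert f B = {}"
    using f(1) assms(1) by (auto simp: pairing_inv_def blocker_moves_def)
  ultimately have "pairing_inv True C (insert f B)" using assms(1) by (simp add: pairing_inv_def)
  with f(1) show ?thesis by blast
qed

lemma ecb_val_le_by_pairing:
  assumes bound: "\<And>C. noncrossing_graph n C \<Longrightarrow> \<forall>e\<in>C. \<forall>f\<in>C. \<not> partner e f \<Longrightarrow>
      num_triangles n C \<le> b"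
    and "pairing_inv t C B"
  shows "ecb_val n k t C B \<le> b"
  using assms(2)
proof (induction k arbitrary: t C B)
  case 0
  then show ?case using bound by (simp add: pairing_inv_def)
next
  case (Suc k)
  have score: "num_triangles n C \<le> b" using bound Suc.prems by (simp add: pairing_inv_def)
  show ?case
  proof (cases t)
    case True
    with Suc.prems have "pairing_inv True C B" by simp
    have "finite (constr_moves n C B)"
      by (rule finite_subset[OF _ finite_ecb_edges]) (auto simp: constr_moves_def)
    moreover have "ecb_val n k False (insert e C) B \<le> b" if "e \<in> constr_moves n C B" for e
      using Suc.IH pairing_inv_constructor_move[OF \<open>pairing_inv True C B\<close> that] by blast
    ultimately show ?thesis using True score by simp
  next
    case False
    show ?thesis
    proof (cases "blocker_moves n C B = {}")
      case True
      then show ?thesis using \<open>\<not> t\<close> score by simp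
    next
      case moves: False
      from Suc.prems \<open>\<not> t\<close> have "pairing_inv False C B" by simp
      have "finite (blocker_moves n C B)"
        by (rule finite_subset[OF _ finite_ecb_edges]) (auto simp: blocker_moves_def)
      moreover obtain f where "f \<in> blocker_moves n C B" "pairing_inv True C (insert f B)"
        using pairing_inv_blocker_reply[OF \<open>pairing_inv False C B\<close> moves] by blast
      moreover have "ecb_val n k True C (insert f B) \<le> b"
        using Suc.IH calculation(3) by blast
      ultimately show ?thesis using False moves by (auto simp: Min_le_iff)
    qed
  qed
qed

end

definition block_partner :: "nat \<Rightarrow> nat \<times> nat \<Rightarrow> nat \<times> nat \<Rightarrow> bool" where
  "block_partner n e f \<longleftrightarrow>
     (\<exists>k. 3 * k + 2 < n \<and> {e, f} = {(3 * k, 3 * k + 1), (3 * k + 1, 3 * k + 2)})"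

lemma edge_pairing_block_partner: "edge_pairing n (block_partner n)"
proof
  fix e f g
  show "block_partner n e f \<Longrightarrow> block_partner n f e"
    by (simp add: block_partner_def insert_commute)
  show "\<not> block_partner n e e"
    by (auto simp: block_partner_def doubleton_eq_iff)
  show "block_partner n e f \<Longrightarrow> f \<in> ecb_edges n"
    by (auto simp: block_partner_def ecb_edges_def doubleton_eq_iff)
  assume "block_partner n e f" "block_partner n e g"
  then obtain k l where
    k: "{e, f} = {(3 * k, 3 * k + 1), (3 * k + 1, 3 * k + 2)}" and
    l: "{e, g} = {(3 * l, 3 * l + 1), (3 * l + 1, 3 * l + 2)}"
    by (auto simp: block_partner_def)
  have "e \<in> {(3 * k, 3 * k + 1), (3 * k + 1, 3 * k + 2)}"
    "e \<in> {(3 * l, 3 * l + 1), (3 * l + 1, 3 * l + 2)}"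
    using k l by blast+
  then have "k = l" by auto
  then have "{e, f} = {e, g}" using k l by simp
  then show "f = g" by (auto simp: doubleton_eq_iff)
qed

lemma g_ECB_K3_le: "g_ECB_K3 n \<le> n - n div 3"
  unfolding g_ECB_K3_def
proof (rule edge_pairing.ecb_val_le_by_pairing[OF edge_pairing_block_partner])
  fix C assume "noncrossing_graph n C" "\<forall>e\<in>C. \<forall>f\<in>C. \<not> block_partner n e f"
  then show "num_triangles n C \<le> n - n div 3"
    by (intro num_triangles_le_if_no_block_path) (auto simp: block_partner_def)
qed (simp add: edge_pairing.pairing_inv_def[OF edge_pairing_block_partner] noncrossing_graph_def)

theorem proposition4p3:
  shows "\<forall>\<epsilon>>0. \<forall>\<^sub>F n in sequentially.
           real (g_ECB_K3 n) \<le> (1 + \<epsilon>) * (2 * real n / 3)"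
proof (intro allI impI)
  fix \<epsilon> :: real assume "\<epsilon> > 0"
  have bound: "3 * real (g_ECB_K3 n) \<le> 2 * real n + 2" for n
  proof -
    have "3 * g_ECB_K3 n \<le> 2 * n + 2"
      using g_ECB_K3_le[of n] div_mult_mod_eq[of n 3] mod_less_divisor[of 3 n] by linarith
    then show ?thesis by linarith
  qed
  obtain N :: nat where "1 / \<epsilon> \<le> real N" using real_arch_simple by blast
  then have "\<forall>\<^sub>F n in sequentially. 1 \<le> \<epsilon> * real n"
    unfolding eventually_sequentially using \<open>\<epsilon> > 0\<close>
    by (intro exI[of _ N]) (auto simp: field_simps intro: order_trans)
  then show "\<forall>\<^sub>F n in sequentially. real (g_ECB_K3 n) \<le> (1 + \<epsilon>) * (2 * real n / 3)"
  proof (rule eventually_mono)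
    fix n assume "1 \<le> \<epsilon> * real n"
    have "3 * ((1 + \<epsilon>) * (2 * real n / 3)) = 2 * real n + 2 * (\<epsilon> * real n)"
      by (simp add: algebra_simps)
    then show "real (g_ECB_K3 n) \<le> (1 + \<epsilon>) * (2 * real n / 3)"
      using bound[of n] \<open>1 \<le> \<epsilon> * real n\<close> by linarith
  qed
qed

end
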